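(* Let $K=2$ and suppose that for every horizon $T$ (a multiple of $100$) a valid pair $(\eta,\gamma)=(\eta_T,\gamma_T)$ in the non-trivial regime is chosen. Then there exists $T_0$ such that for all $T\ge T_0$ with $\Pr(\mathcal E_2)>0$, WSU-UX run on the two-phase loss sequence satisfies $$\Pr\Bigl(\pi_{T+1,1}\le\tfrac34\,\Bigm|\,\mathcal E_2\Bigr)\le\frac{75}{4}\,e^{-c\eta T},\qquad c=\tfrac{79}{400}.$$
   Context: WSU-UX. Fix integers $K\ge 2$ and $T\ge 1$ and hyperparameters $\eta,\gamma$. The pair $(\eta,\gamma)$ is called valid if $\eta,\gamma\in(0,1/2)$ and $\eta K/\gamma\le 1/2$. Given a fixed loss sequence $\ell_t\in[0,1]^K$, WSU-UX sets $\pi_{1,i}=1/K$ and in each round $t$: forms $\tilde\pi_{t,i}=(1-\gamma)\pi_{t,i}+\gamma/K$; draws $I_t$ with $\Pr(I_t=i\mid\mathcal F_{t-1})=\tilde\pi_{t,i}$; sets $\hat\ell_{t,i}=\ell_{t,i}\mathbf 1[I_t=i]/\tilde\pi_{t,i}$; and updates $\pi_{t+1,i}=\pi_{t,i}\bigl(1-\eta(\hat\ell_{t,i}-\sum_{j}\pi_{t,j}\hat\ell_{t,j})\bigr)$; $\mathcal F_t$ is the history generated by $I_1,\dots,I_t$. Non-trivial regime: $\eta\ge T^{-2/3}$ and $\gamma\le T^{-1/3}$. Two-phase loss sequence ($K=2$, $T$ a multiple of $100$): with $T_1=\frac{T}{100}$, $\ell_{t,1}=1,\ell_{t,2}=0$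 for $1\le t\le T_1$ and $\ell_{t,1}=0,\ell_{t,2}=1$ for $T_1<t\le T$. Further $T_2=\frac{2}{10}T$, and $\mathcal E_2$ denotes the event $\{\pi_{T_1+T_2+1,1}\ge\frac14\}$. *)

theory Defs
  imports Complex_Main
begin

text \<open>WSU-UX with K arms, indexed 0..K-1 (paper's arm i is index i-1).
  Losses: l t i for round t (1-based) and arm index i.
  A history is a list of chosen arms in REVERSE chronological order:
  [I_t, ..., I_1].  wsu_pi K eta gamma l h is the weight vector pi_{t+1}
  after history h of length t; wsu_pi ... [] is pi_1.\<close>

definition wsu_tilde :: "nat \<Rightarrow> real \<Rightarrow> (nat \<Rightarrow> real) \<Rightarrow> nat \<Rightarrow> real" where
  "wsu_tilde K gamma p i = (1 - gamma) * p i + gamma / real K"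

fun wsu_pi :: "nat \<Rightarrow> real \<Rightarrow> real \<Rightarrow> (nat \<Rightarrow> nat \<Rightarrow> real) \<Rightarrow> nat list \<Rightarrow> nat \<Rightarrow> real" where
  "wsu_pi K eta gamma l [] = (\<lambda>i. 1 / real K)"
| "wsu_pi K eta gamma l (I # hs) =
     (let t = length hs + 1;
          p = wsu_pi K eta gamma l hs;
          lhat = (\<lambda>i. if i = I then l t i / wsu_tilde K gamma p i else 0)
      in (\<lambda>i. p i * (1 - eta * (lhat i - (\<Sum>j<K. p j * lhat j)))))"

fun wsu_hist_prob :: "nat \<Rightarrow> real \<Rightarrow> real \<Rightarrow> (nat \<Rightarrow> nat \<Rightarrow> real) \<Rightarrow> nat list \<Rightarrow> real" where
  "wsu_hist_prob K eta gamma l [] = 1"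
| "wsu_hist_prob K eta gamma l (I # hs) =
     wsu_hist_prob K eta gamma l hs * wsu_tilde K gamma (wsu_pi K eta gamma l hs) I"

definition histories :: "nat \<Rightarrow> nat \<Rightarrow> nat list set" where
  "histories K n = {hs. length hs = n \<and> set hs \<subseteq> {..<K}}"

definition wsu_prob :: "nat \<Rightarrow> real \<Rightarrow> real \<Rightarrow> (nat \<Rightarrow> nat \<Rightarrow> real) \<Rightarrow> nat \<Rightarrow> (nat list \<Rightarrow> bool) \<Rightarrow> real" where
  "wsu_prob K eta gamma l T E = (\<Sum>hs\<in>{hs\<in>histories K T. E hs}. wsu_hist_prob K eta gamma l hs)"

definition cond_prob :: "nat \<Rightarrow> real \<Rightarrow> real \<Rightarrow> (nat \<Rightarrow> nat \<Rightarrow> real) \<Rightarrow> nat \<Rightarrow> (nat list \<Rightarrow> bool) \<Rightarrow> (nat list \<Rightarrow> bool) \<Rightarrow> real" where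
  "cond_prob K eta gamma l T A E = wsu_prob K eta gamma l T (\<lambda>hs. A hs \<and> E hs) / wsu_prob K eta gamma l T E"

definition valid_pair :: "nat \<Rightarrow> real \<Rightarrow> real \<Rightarrow> bool" where
  "valid_pair K eta gamma \<longleftrightarrow> 0 < eta \<and> eta < 1/2 \<and> 0 < gamma \<and> gamma < 1/2 \<and> eta * real K / gamma \<le> 1/2"

definition nontrivial_regime :: "nat \<Rightarrow> real \<Rightarrow> real \<Rightarrow> bool" where
  "nontrivial_regime T eta gamma \<longleftrightarrow> eta \<ge> real T powr (-2/3) \<and> gamma \<le> real T powr (-1/3)"

text \<open>Two-phase loss sequence (K = 2), T1 = T/100. Arm 1 = index 0, arm 2 = index 1.\<close>
definition two_phase_loss :: "nat \<Rightarrow> nat \<Rightarrow> nat \<Rightarrow> real" where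
  "two_phase_loss T t i = (if t \<le> T div 100 then (if i = 0 then 1 else 0) else (if i = 0 then 0 else 1))"

text \<open>pi_{s+1} evaluated from a full history hs (length T, reversed): drop the last T-s rounds.\<close>
definition pi_at :: "nat \<Rightarrow> real \<Rightarrow> real \<Rightarrow> (nat \<Rightarrow> nat \<Rightarrow> real) \<Rightarrow> nat list \<Rightarrow> nat \<Rightarrow> nat \<Rightarrow> real" where
  "pi_at K eta gamma l hs s = wsu_pi K eta gamma l (drop (length hs - s) hs)"

end

theory Submission
  imports Defs
begin

text \<open>In phase two arm 1 (index 0) has loss 0 and arm 2 has loss 1. Pulling arm 1 then leaves the
  weights unchanged, while pulling arm 2 multiplies the weight p of arm 1 by
  1 + eta q / q', where q is the weight of arm 2 and q' its sampling probability. As long as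
  1/4 \<le> p \<le> 3/4, arm 2 is pulled with probability at least 1/4 and this factor is at least
  1 + eta/2. Hence for s \<approx> 2/eta the potential (3/(4p))^s halves on every pull of arm 2, and its
  expectation over the paths that have stayed in p \<le> 3/4 shrinks by the factor 7/8 per round.
  On E2 the potential starts below 3^s, so the conditional probability is at most
  3^s (7/8)^(79T/100), which the non-trivial regime turns into the stated exponential.\<close>

lemma wsu_tilde_ge:
  assumes "0 \<le> p i" "gamma \<le> 1"
  shows "gamma / real K \<le> wsu_tilde K gamma p i"
  using assms unfolding wsu_tilde_def by (simp add: mult_nonneg_nonneg)

lemma sum_wsu_tilde:
  assumes "0 < K" "(\<Sum>i<K. p i) = 1"
  shows "(\<Sum>i<K. wsu_tilde K gamma p i) = 1"
  using assms by (simp add: wsu_tilde_def sum.distrib flip: sum_distrib_left)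

lemma wsu_pi_simplex:
  assumes K: "0 < K" and gamma: "0 < gamma" "gamma \<le> 1"
    and eta: "0 \<le> eta" "eta * real K / gamma \<le> 1"
    and l: "\<And>t i. 0 \<le> l t i \<and> l t i \<le> 1"
  shows "(\<forall>i<K. 0 \<le> wsu_pi K eta gamma l h i) \<and> (\<Sum>i<K. wsu_pi K eta gamma l h i) = 1"
proof (induction h)
  case Nil
  then show ?case using K by simp
next
  case (Cons I h)
  define p where "p = wsu_pi K eta gamma l h"
  define lhat where "lhat i = (if i = I then l (length h + 1) i / wsu_tilde K gamma p i else 0)" for i
  define S where "S = (\<Sum>j<K. p j * lhat j)"
  have p: "\<And>i. i < K \<Longrightarrow> 0 \<le> p i" "(\<Sum>i<K. p i) = 1"
    using Cons unfolding p_def by auto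
  \<comment> \<open>Each importance-weighted loss is at most K/gamma, so every factor stays nonnegative.\<close>
  have lhat: "0 \<le> lhat i \<and> eta * lhat i \<le> 1" if "i < K" for i
  proof -
    have t: "gamma / real K \<le> wsu_tilde K gamma p i"
      using wsu_tilde_ge p(1)[OF that] gamma by blast
    have t0: "0 < wsu_tilde K gamma p i" using t gamma K by (smt (verit) divide_pos_pos of_nat_0_less_iff)
    have "lhat i \<le> 1 / wsu_tilde K gamma p i"
      unfolding lhat_def using t0 l by (auto intro: divide_right_mono)
    also have "\<dots> \<le> 1 / (gamma / real K)"
      using t t0 gamma K by (intro divide_left_mono) auto
    finally have "eta * lhat i \<le> eta * real K / gamma"
      using eta by (auto dest: mult_left_mono[of _ _ eta])
    moreover have "0 \<le> lhat i"
      unfolding lhat_def using t0 l by auto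
    ultimately show ?thesis using eta by linarith
  qed
  have S: "0 \<le> S" unfolding S_def using p lhat by (auto intro!: sum_nonneg)
  have step: "wsu_pi K eta gamma l (I # h) = (\<lambda>i. p i * (1 - eta * (lhat i - S)))"
    unfolding wsu_pi.simps Let_def p_def lhat_def S_def by (rule refl)
  have "0 \<le> p i * (1 - eta * (lhat i - S))" if "i < K" for i
    using p(1)[OF that] lhat[OF that] S eta by (intro mult_nonneg_nonneg) (auto simp: algebra_simps intro: add_increasing2)
  moreover have "(\<Sum>i<K. p i * (1 - eta * (lhat i - S))) = (\<Sum>i<K. p i) - eta * S + eta * S * (\<Sum>i<K. p i)"
    by (simp add: algebra_simps sum.distrib sum_subtractf sum_distrib_left sum_distrib_right)
       (simp add: S_def sum_distrib_left algebra_simps)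
  ultimately show ?case unfolding step using p(2) by simp
qed

lemma wsu_hist_prob_nonneg:
  assumes "0 < K" "0 < gamma" "gamma \<le> 1" "0 \<le> eta" "eta * real K / gamma \<le> 1"
    and "\<And>t i. 0 \<le> l t i \<and> l t i \<le> 1" and "set h \<subseteq> {..<K}"
  shows "0 \<le> wsu_hist_prob K eta gamma l h"
  using assms(7)
proof (induction h)
  case (Cons I h)
  have "0 \<le> wsu_pi K eta gamma l h I"
    using wsu_pi_simplex[OF assms(1-6)] Cons.prems by auto
  then have "0 \<le> wsu_tilde K gamma (wsu_pi K eta gamma l h) I"
    using wsu_tilde_ge[of "wsu_pi K eta gamma l h" I gamma K] assms(2,3)
    by (smt (verit) divide_nonneg_nonneg of_nat_0_le_iff)
  then show ?case using Cons by simp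
qed simp

lemma histories_0: "histories K 0 = {[]}"
  by (auto simp: histories_def)

lemma histories_Suc: "histories K (Suc n) = (\<lambda>(c, I). c @ [I]) ` (histories K n \<times> {..<K})"
proof (intro set_eqI iffI)
  fix x assume "x \<in> histories K (Suc n)"
  then have "length x = Suc n" "set x \<subseteq> {..<K}" by (auto simp: histories_def)
  then obtain c I where "x = c @ [I]" by (metis length_Suc_conv_rev)
  with \<open>length x = Suc n\<close> \<open>set x \<subseteq> {..<K}\<close>
  show "x \<in> (\<lambda>(c, I). c @ [I]) ` (histories K n \<times> {..<K})"
    by (auto simp: histories_def image_iff)
qed (auto simp: histories_def)

lemma finite_histories: "finite (histories K n)"
  by (induction n) (simp_all add: histories_0 histories_Suc)

lemma sum_histories_Suc:
  "(\<Sum>x\<in>histories K (Suc n). f x) = (\<Sum>I<K. \<Sum>c\<in>histories K n. f (c @ [I]))"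
proof -
  have "inj_on (\<lambda>(c, I). c @ [I]) (histories K n \<times> {..<K})"
    by (auto simp: inj_on_def)
  then have "(\<Sum>x\<in>histories K (Suc n). f x) = (\<Sum>(c, I)\<in>histories K n \<times> {..<K}. f (c @ [I]))"
    unfolding histories_Suc by (subst sum.reindex) (simp_all add: case_prod_unfold)
  also have "\<dots> = (\<Sum>I<K. \<Sum>c\<in>histories K n. f (c @ [I]))"
    by (simp add: sum.cartesian_product[symmetric] sum.swap[of _ "histories K n"])
  finally show ?thesis .
qed

lemma histories_add: "histories K (a + b) = (\<lambda>(c, d). c @ d) ` (histories K a \<times> histories K b)"
proof (intro set_eqI iffI)
  fix x assume "x \<in> histories K (a + b)"
  then show "x \<in> (\<lambda>(c, d). c @ d) ` (histories K a \<times> histories K b)"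
    unfolding image_iff histories_def
    by (intro bexI[of _ "(take a x, drop a x)"]) (auto dest: in_set_takeD in_set_dropD)
qed (auto simp: histories_def)

lemma sum_histories_add:
  "(\<Sum>x\<in>histories K (a + b). f x) = (\<Sum>d\<in>histories K b. \<Sum>c\<in>histories K a. f (c @ d))"
proof -
  have "inj_on (\<lambda>(c, d). c @ d) (histories K a \<times> histories K b)"
    by (auto simp: inj_on_def histories_def)
  then have "(\<Sum>x\<in>histories K (a + b). f x) = (\<Sum>(c, d)\<in>histories K a \<times> histories K b. f (c @ d))"
    unfolding histories_add by (subst sum.reindex) (simp_all add: case_prod_unfold)
  also have "\<dots> = (\<Sum>d\<in>histories K b. \<Sum>c\<in>histories K a. f (c @ d))"
    by (simp add: sum.cartesian_product[symmetric] sum.swap[of _ "histories K a"])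
  finally show ?thesis .
qed

lemma sum_wsu_hist_prob_extend:
  assumes "0 < K" "0 < gamma" "gamma \<le> 1" "0 \<le> eta" "eta * real K / gamma \<le> 1"
    and "\<And>t i. 0 \<le> l t i \<and> l t i \<le> 1"
  shows "(\<Sum>c\<in>histories K n. wsu_hist_prob K eta gamma l (c @ h)) = wsu_hist_prob K eta gamma l h"
proof (induction n arbitrary: h)
  case (Suc n)
  have "(\<Sum>I<K. wsu_tilde K gamma (wsu_pi K eta gamma l h) I) = 1"
    using wsu_pi_simplex[OF assms] by (intro sum_wsu_tilde[OF assms(1)]) simp
  then show ?case
    by (simp add: sum_histories_Suc Suc.IH flip: sum_distrib_left)
qed (simp add: histories_0)

lemma wsu_prob_split:
  "wsu_prob K eta gamma l (n + m) F =
     (\<Sum>h\<in>histories K m. \<Sum>c\<in>histories K n. if F (c @ h) then wsu_hist_prob K eta gamma l (c @ h) else 0)"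
  unfolding wsu_prob_def by (simp add: sum.inter_filter[OF finite_histories] sum_histories_add)

lemma pi_at_append:
  assumes "length c = n" "length h = m"
  shows "pi_at K eta gamma l (c @ h) m = wsu_pi K eta gamma l h"
    "pi_at K eta gamma l (c @ h) (n + m) = wsu_pi K eta gamma l (c @ h)"
  using assms by (simp_all add: pi_at_def)

lemma wsu_prob_pi_at_event:
  assumes "0 < K" "0 < gamma" "gamma \<le> 1" "0 \<le> eta" "eta * real K / gamma \<le> 1"
    and "\<And>t i. 0 \<le> l t i \<and> l t i \<le> 1"
  shows "wsu_prob K eta gamma l (n + m) (\<lambda>hs. P (pi_at K eta gamma l hs m)) =
    (\<Sum>h\<in>histories K m. if P (wsu_pi K eta gamma l h) then wsu_hist_prob K eta gamma l h else 0)"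
  unfolding wsu_prob_split
proof (rule sum.cong[OF refl])
  fix h assume "h \<in> histories K m"
  then have "(\<Sum>c\<in>histories K n. if P (pi_at K eta gamma l (c @ h) m) then wsu_hist_prob K eta gamma l (c @ h) else 0)
      = (if P (wsu_pi K eta gamma l h) then \<Sum>c\<in>histories K n. wsu_hist_prob K eta gamma l (c @ h) else 0)"
    by (auto simp: histories_def pi_at_append intro: sum.cong)
  also have "\<dots> = (if P (wsu_pi K eta gamma l h) then wsu_hist_prob K eta gamma l h else 0)"
    using sum_wsu_hist_prob_extend[OF assms] by simp
  finally show "(\<Sum>c\<in>histories K n. if P (pi_at K eta gamma l (c @ h) m) then wsu_hist_prob K eta gamma l (c @ h) else 0)
      = (if P (wsu_pi K eta gamma l h) then wsu_hist_prob K eta gamma l h else 0)" .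
qed

lemma sum_histories_two_Suc:
  "(\<Sum>c\<in>histories 2 (Suc n). f (c @ h)) = (\<Sum>c\<in>histories 2 n. f (c @ 0 # h)) + (\<Sum>c\<in>histories 2 n. f (c @ 1 # h))"
  by (simp add: sum_histories_Suc numeral_2_eq_2)

lemma potential_drift:
  fixes p p' a t0 t1 :: real
  assumes p: "0 < p" "p * (1 + a) \<le> p'" and a: "0 \<le> a" "2 \<le> (1 + a) ^ s"
    and t: "t0 + t1 = 1" "0 \<le> t0" "1/4 \<le> t1"
  shows "t0 * (3 / (4 * p)) ^ s + t1 * (3 / (4 * p')) ^ s \<le> 7/8 * (3 / (4 * p)) ^ s"
proof -
  define B where "B = (3 / (4 * p)) ^ s"
  have B: "0 \<le> B" unfolding B_def using p by simp
  have "0 < p * (1 + a)" using p a by simp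
  then have "(3 / (4 * p')) ^ s \<le> (3 / (4 * (p * (1 + a)))) ^ s"
    using p by (intro power_mono divide_left_mono) auto
  also have "\<dots> = B / (1 + a) ^ s"
    unfolding B_def by (simp add: power_divide power_mult_distrib)
  also have "\<dots> \<le> B / 2"
    using a B by (intro divide_left_mono) auto
  finally have "t1 * (3 / (4 * p')) ^ s \<le> t1 * (B / 2)"
    using t by (intro mult_left_mono) auto
  moreover have "t0 * B + t1 * (B / 2) = (t0 + t1) * B - t1 * B / 2"
    by (simp add: algebra_simps)
  moreover have "1/4 * B \<le> t1 * B"
    using mult_right_mono[OF t(3) B] .
  ultimately show ?thesis unfolding B_def t(1) by linarith
qed

context
  fixes eta gamma :: real and l :: "nat \<Rightarrow> nat \<Rightarrow> real" and N :: nat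
  assumes gamma: "0 < gamma" "gamma \<le> 1"
    and eta: "0 \<le> eta" "eta * 2 / gamma \<le> 1"
    and loss: "\<And>t i. 0 \<le> l t i \<and> l t i \<le> 1"
    and phase_two: "\<And>t. N < t \<Longrightarrow> l t 0 = 0 \<and> l t 1 = 1"
begin

abbreviation "\<pi> \<equiv> wsu_pi 2 eta gamma l"
abbreviation "\<rho> \<equiv> wsu_hist_prob 2 eta gamma l"

lemma two_arms_simplex: "0 \<le> \<pi> h 0" "0 \<le> \<pi> h 1" "\<pi> h 0 + \<pi> h 1 = 1"
  using wsu_pi_simplex[of 2 gamma eta l h] gamma eta loss by (auto simp: numeral_2_eq_2)

lemma phase_two_pull_arm0: "N \<le> length h \<Longrightarrow> \<pi> (0 # h) = \<pi> h"
  using phase_two[of "Suc (length h)"] by (auto simp: Let_def numeral_2_eq_2)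

lemma phase_two_pull_arm1:
  "N \<le> length h \<Longrightarrow> \<pi> (1 # h) 0 = \<pi> h 0 * (1 + eta * (\<pi> h 1 / wsu_tilde 2 gamma (\<pi> h) 1))"
  using phase_two[of "Suc (length h)"] by (auto simp: Let_def numeral_2_eq_2)

lemma phase_two_pull_mono: "N \<le> length h \<Longrightarrow> \<pi> h 0 \<le> \<pi> (I # h) 0"
proof -
  assume N: "N \<le> length h"
  consider "I = 0" | "I = 1" | "I \<notin> {0, 1}" by blast
  then show ?thesis
  proof cases
    case 2
    have "0 \<le> wsu_tilde 2 gamma (\<pi> h) 1"
      using two_arms_simplex(2)[of h] gamma by (simp add: wsu_tilde_def)
    then have "0 \<le> eta * (\<pi> h 1 / wsu_tilde 2 gamma (\<pi> h) 1)"
      using eta two_arms_simplex(2)[of h] by simp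
    then show ?thesis
      using 2 phase_two_pull_arm1[OF N] two_arms_simplex(1)[of h] by (simp add: mult_le_cancel_left1)
  next
    case 3
    then show ?thesis by (auto simp: Let_def numeral_2_eq_2)
  qed (use phase_two_pull_arm0[OF N] in simp)
qed

lemma phase_two_mono: "N \<le> length h \<Longrightarrow> \<pi> h 0 \<le> \<pi> (c @ h) 0"
proof (induction c)
  case (Cons I c)
  then have "N \<le> length (c @ h)" by simp
  from phase_two_pull_mono[OF this, of I] Cons show ?case by (simp del: wsu_pi.simps)
qed simp

lemma phase_two_pull_arm1_growth:
  assumes N: "N \<le> length h" and p1: "1/4 \<le> \<pi> h 1"
  shows "1/4 \<le> wsu_tilde 2 gamma (\<pi> h) 1" "\<pi> h 0 * (1 + eta / 2) \<le> \<pi> (1 # h) 0"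
proof -
  define t where "t = wsu_tilde 2 gamma (\<pi> h) 1"
  have t: "t = (1 - gamma) * \<pi> h 1 + gamma / 2" unfolding t_def wsu_tilde_def by simp
  have "1/4 - gamma/4 \<le> (1 - gamma) * \<pi> h 1"
    using mult_left_mono[OF p1, of "1 - gamma"] gamma by simp
  then show t_ge: "1/4 \<le> wsu_tilde 2 gamma (\<pi> h) 1"
    using t gamma unfolding t_def by linarith
  have "gamma / 2 \<le> (1 + gamma) * (1/4)" using gamma by simp
  also have "\<dots> \<le> (1 + gamma) * \<pi> h 1" using p1 gamma by (intro mult_left_mono) auto
  finally have "t \<le> 2 * \<pi> h 1" using t by (simp add: algebra_simps)
  then have "1/2 \<le> \<pi> h 1 / t" using t_ge unfolding t_def by (simp add: field_simps)
  then have "eta / 2 \<le> eta * (\<pi> h 1 / t)"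
    using eta mult_left_mono by fastforce
  then show "\<pi> h 0 * (1 + eta / 2) \<le> \<pi> (1 # h) 0"
    using phase_two_pull_arm1[OF N] two_arms_simplex(1)[of h] unfolding t_def
    by (simp add: mult_left_mono)
qed

lemma two_arms_tilde:
  "0 \<le> wsu_tilde 2 gamma (\<pi> h) 0" "wsu_tilde 2 gamma (\<pi> h) 0 + wsu_tilde 2 gamma (\<pi> h) 1 = 1"
  using two_arms_simplex[of h] gamma
  by (simp_all add: wsu_tilde_def mult_nonneg_nonneg) (simp add: algebra_simps flip: distrib_left)

lemma two_arms_hist_prob_nonneg: "set h \<subseteq> {..<2} \<Longrightarrow> 0 \<le> \<rho> h"
  using wsu_hist_prob_nonneg[of 2 gamma eta l h] gamma eta loss by simp

lemma phase_two_potential_drift: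
  assumes N: "N \<le> length h" and p: "1/4 \<le> \<pi> h 0" "\<pi> h 0 \<le> 3/4" and s: "2 \<le> (1 + eta / 2) ^ s"
  shows "wsu_tilde 2 gamma (\<pi> h) 0 * (3 / (4 * \<pi> h 0)) ^ s + wsu_tilde 2 gamma (\<pi> h) 1 * (3 / (4 * \<pi> (1 # h) 0)) ^ s
    \<le> 7/8 * (3 / (4 * \<pi> h 0)) ^ s"
proof -
  have p1: "1/4 \<le> \<pi> h 1" using p(2) two_arms_simplex(3)[of h] by linarith
  define p' where "p' = \<pi> (1 # h) 0"
  have "\<pi> h 0 * (1 + eta / 2) \<le> p'"
    using phase_two_pull_arm1_growth(2)[OF N p1] unfolding p'_def .
  then show ?thesis
    using p s eta two_arms_tilde[of h] phase_two_pull_arm1_growth(1)[OF N p1]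
    unfolding p'_def[symmetric] by (intro potential_drift) auto
qed

lemma phase_two_tail_bound:
  assumes s: "2 \<le> (1 + eta / 2) ^ s"
  shows "N \<le> length h \<Longrightarrow> set h \<subseteq> {..<2} \<Longrightarrow> 1/4 \<le> \<pi> h 0 \<Longrightarrow>
    (\<Sum>c\<in>histories 2 n. if \<pi> (c @ h) 0 \<le> 3/4 then \<rho> (c @ h) else 0)
      \<le> \<rho> h * (3 / (4 * \<pi> h 0)) ^ s * (7/8) ^ n"
proof (induction n arbitrary: h)
  case 0
  have "\<rho> h * 1 \<le> \<rho> h * (3 / (4 * \<pi> h 0)) ^ s" if "\<pi> h 0 \<le> 3/4"
    using that 0 two_arms_hist_prob_nonneg[of h]
    by (intro mult_left_mono one_le_power) (auto simp: field_simps)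
  then show ?case
    unfolding histories_0 using 0 two_arms_hist_prob_nonneg[of h] by simp
next
  case (Suc n)
  have \<rho>: "0 \<le> \<rho> h" using Suc.prems two_arms_hist_prob_nonneg by simp
  show ?case
  proof (cases "\<pi> h 0 \<le> 3/4")
    case False
    then have "\<not> \<pi> (c @ h) 0 \<le> 3/4" for c
      using phase_two_mono[OF Suc.prems(1), of c] by linarith
    then show ?thesis using \<rho> Suc.prems(3) by simp
  next
    case True
    define p where "p = \<pi> h 0"
    define p' where "p' = \<pi> (1 # h) 0"
    define t0 where "t0 = wsu_tilde 2 gamma (\<pi> h) 0"
    define t1 where "t1 = wsu_tilde 2 gamma (\<pi> h) 1"
    have prems0: "N \<le> length (0 # h)" "set (0 # h) \<subseteq> {..<2}" "1/4 \<le> \<pi> (0 # h) 0"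
      using Suc.prems phase_two_pull_arm0 by auto
    have prems1: "N \<le> length (1 # h)" "set (1 # h) \<subseteq> {..<2}" "1/4 \<le> \<pi> (1 # h) 0"
      using Suc.prems phase_two_pull_mono[of h 1] by auto
    have "(\<Sum>c\<in>histories 2 (Suc n). if \<pi> (c @ h) 0 \<le> 3/4 then \<rho> (c @ h) else 0)
      = (\<Sum>c\<in>histories 2 n. if \<pi> (c @ 0 # h) 0 \<le> 3/4 then \<rho> (c @ 0 # h) else 0)
      + (\<Sum>c\<in>histories 2 n. if \<pi> (c @ 1 # h) 0 \<le> 3/4 then \<rho> (c @ 1 # h) else 0)"
      by (rule sum_histories_two_Suc[where f = "\<lambda>x. if \<pi> x 0 \<le> 3/4 then \<rho> x else 0"])
    also have "\<dots> \<le> \<rho> h * t0 * (3 / (4 * p)) ^ s * (7/8) ^ n + \<rho> h * t1 * (3 / (4 * p')) ^ s * (7/8) ^ n"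
      using Suc.IH[OF prems0] Suc.IH[OF prems1] phase_two_pull_arm0[OF Suc.prems(1)]
      unfolding p_def p'_def t0_def t1_def by (simp del: wsu_pi.simps)
    also have "\<dots> = \<rho> h * (7/8) ^ n * (t0 * (3 / (4 * p)) ^ s + t1 * (3 / (4 * p')) ^ s)"
      by (simp add: algebra_simps)
    also have "\<dots> \<le> \<rho> h * (7/8) ^ n * (7/8 * (3 / (4 * p)) ^ s)"
      using phase_two_potential_drift[OF Suc.prems(1,3) True s] \<rho>
      unfolding p_def p'_def t0_def t1_def by (intro mult_left_mono) auto
    also have "\<dots> = \<rho> h * (3 / (4 * p)) ^ s * (7/8) ^ Suc n"
      by (simp only: power_Suc mult_ac)
    finally show ?thesis unfolding p_def .
  qed
qed

lemma phase_two_cond_prob_bound: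
  assumes s: "2 \<le> (1 + eta / 2) ^ s" and m: "N \<le> m"
    and E: "0 < wsu_prob 2 eta gamma l (n + m) (\<lambda>hs. 1/4 \<le> pi_at 2 eta gamma l hs m 0)"
  shows "cond_prob 2 eta gamma l (n + m) (\<lambda>hs. pi_at 2 eta gamma l hs (n + m) 0 \<le> 3/4)
           (\<lambda>hs. 1/4 \<le> pi_at 2 eta gamma l hs m 0) \<le> 3 ^ s * (7/8) ^ n"
proof -
  have "wsu_prob 2 eta gamma l (n + m) (\<lambda>hs. 1/4 \<le> pi_at 2 eta gamma l hs m 0)
      = (\<Sum>h\<in>histories 2 m. if 1/4 \<le> \<pi> h 0 then \<rho> h else 0)"
    using wsu_prob_pi_at_event[of 2 gamma eta l n m "\<lambda>p. 1/4 \<le> p 0"] gamma eta loss by simp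
  moreover have "wsu_prob 2 eta gamma l (n + m)
        (\<lambda>hs. pi_at 2 eta gamma l hs (n + m) 0 \<le> 3/4 \<and> 1/4 \<le> pi_at 2 eta gamma l hs m 0)
      \<le> (\<Sum>h\<in>histories 2 m. if 1/4 \<le> \<pi> h 0 then \<rho> h * (3 ^ s * (7/8) ^ n) else 0)"
    unfolding wsu_prob_split
  proof (rule sum_mono)
    fix h assume h: "h \<in> histories 2 m"
    then have h': "N \<le> length h" "set h \<subseteq> {..<2}" using m by (auto simp: histories_def)
    \<comment> \<open>Histories are stored latest round first, so the rounds after m form the prefix c.\<close>
    have "(\<Sum>c\<in>histories 2 n. if pi_at 2 eta gamma l (c @ h) (n + m) 0 \<le> 3/4 \<and> 1/4 \<le> pi_at 2 eta gamma l (c @ h) m 0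
            then \<rho> (c @ h) else 0)
        = (if 1/4 \<le> \<pi> h 0 then \<Sum>c\<in>histories 2 n. if \<pi> (c @ h) 0 \<le> 3/4 then \<rho> (c @ h) else 0 else 0)"
      using h by (auto simp: histories_def pi_at_append intro: sum.cong)
    also have "\<dots> \<le> (if 1/4 \<le> \<pi> h 0 then \<rho> h * (3 ^ s * (7/8) ^ n) else 0)"
    proof (cases "1/4 \<le> \<pi> h 0")
      case True
      have "(3 / (4 * \<pi> h 0)) ^ s \<le> 3 ^ s"
        using True by (intro power_mono) (auto simp: field_simps)
      then have "\<rho> h * (3 / (4 * \<pi> h 0)) ^ s * (7/8) ^ n \<le> \<rho> h * (3 ^ s * (7/8) ^ n)"
        using two_arms_hist_prob_nonneg[OF h'(2)] by (simp add: mult.assoc mult_left_mono)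
      then show ?thesis using True phase_two_tail_bound[OF s h' True, of n] by simp
    qed simp
    finally show "(\<Sum>c\<in>histories 2 n. if pi_at 2 eta gamma l (c @ h) (n + m) 0 \<le> 3/4 \<and> 1/4 \<le> pi_at 2 eta gamma l (c @ h) m 0
            then \<rho> (c @ h) else 0)
        \<le> (if 1/4 \<le> \<pi> h 0 then \<rho> h * (3 ^ s * (7/8) ^ n) else 0)" .
  qed
  moreover have "(\<Sum>h\<in>histories 2 m. if 1/4 \<le> \<pi> h 0 then \<rho> h * (3 ^ s * (7/8) ^ n) else 0)
      = 3 ^ s * (7/8) ^ n * (\<Sum>h\<in>histories 2 m. if 1/4 \<le> \<pi> h 0 then \<rho> h else 0)"
    unfolding sum_distrib_left by (intro sum.cong) auto
  ultimately show ?thesis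
    using E unfolding cond_prob_def by (simp add: divide_le_eq)
qed

end

lemma doubling_exponent:
  assumes "0 < eta"
  obtains s :: nat where "2 \<le> (1 + eta / 2) ^ s" "real s \<le> 2 / eta + 1"
proof
  define s where "s = nat \<lceil>2 / eta\<rceil>"
  have "real s = of_int \<lceil>2 / eta\<rceil>" unfolding s_def using assms by simp
  then have s: "2 / eta \<le> real s" "real s \<le> 2 / eta + 1" by linarith+
  then have "1 \<le> real s * (eta / 2)" using assms by (simp add: field_simps)
  then show "2 \<le> (1 + eta / 2) ^ s"
    using Bernoulli_inequality[of "eta / 2" s] assms by simp
  show "real s \<le> 2 / eta + 1" by (fact s(2))
qed

lemma tail_bound_le_exp:
  fixes T n s :: nat and eta gamma :: real
  assumes T: "10^6 \<le> T" and eta: "T powr (-2/3) \<le> eta" and gamma: "gamma \<le> T powr (-1/3)"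
    and eta_gamma: "4 * eta \<le> gamma" and s: "real s \<le> 2 / eta + 1" and n: "real n = 79/100 * real T"
  shows "3 ^ s * (7/8 :: real) ^ n \<le> exp (- (79/400) * eta * real T)"
proof -
  define x where "x = real T powr (1/3)"
  have T0: "0 < real T" using T by simp
  have x0: "0 < x" unfolding x_def using T0 by simp
  have x3: "x ^ 3 = real T" unfolding x_def using T0 by (simp add: powr_power)
  have "real T powr (2/3) = x ^ 2" unfolding x_def using T0 by (simp add: powr_power)
  then have "1 / x ^ 2 \<le> eta" using eta by (simp add: powr_minus_divide)
  moreover have "0 < eta" using eta T0 by (smt (verit) powr_gt_zero)
  ultimately have inv_eta: "1 / eta \<le> x ^ 2" using x0 by (simp add: field_simps)
  have x100: "100 \<le> x"
  proof (rule ccontr)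
    assume "\<not> 100 \<le> x"
    then have "x ^ 3 < 100 ^ 3" using x0 by (intro power_strict_mono) auto
    then show False using x3 T by simp
  qed
  have "eta * real T \<le> 1 / (4 * x) * x ^ 3"
    unfolding x3 using eta_gamma gamma T0 by (intro mult_right_mono) (auto simp: x_def powr_minus_divide)
  also have "\<dots> = x ^ 2 / 4" using x0 by (simp add: power3_eq_cube power2_eq_square)
  finally have eta_T: "eta * real T \<le> x ^ 2 / 4" .
  have "2 * real s \<le> 4 * x ^ 2 + 2" using s inv_eta by (simp add: divide_inverse)
  moreover have "real n / 8 = 79/800 * x ^ 3" using n x3 by simp
  moreover have "79/800 * 100 * x ^ 2 \<le> 79/800 * x ^ 3"
    using x100 x0 by (simp add: power3_eq_cube power2_eq_square mult_right_mono)
  moreover have "1 \<le> x ^ 2" using x100 by (simp add: one_le_power)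
  ultimately have exponent: "2 * real s - real n / 8 \<le> - (79/400) * eta * real T"
    using eta_T by linarith
  have "(3::real) ^ s \<le> exp 2 ^ s"
    using exp_ge_add_one_self[of 2] by (intro power_mono) auto
  also have "\<dots> = exp (2 * real s)" by (simp add: exp_of_nat_mult[symmetric] mult.commute)
  finally have "(3::real) ^ s \<le> exp (2 * real s)" .
  moreover have "(7/8::real) ^ n \<le> exp (- 1/8) ^ n"
    using exp_ge_add_one_self[of "- 1/8"] by (intro power_mono) auto
  moreover have "exp (- 1/8) ^ n = exp (- real n / 8)" by (simp add: exp_of_nat_mult[symmetric])
  ultimately have "3 ^ s * (7/8::real) ^ n \<le> exp (2 * real s) * exp (- real n / 8)"
    by (intro mult_mono) auto
  also have "\<dots> = exp (2 * real s - real n / 8)" by (simp add: exp_add[symmetric])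
  also have "\<dots> \<le> exp (- (79/400) * eta * real T)" using exponent by simp
  finally show ?thesis .
qed

lemma two_phase_cond_prob_bound:
  fixes eta gamma :: real and T :: nat
  defines "l \<equiv> two_phase_loss T" and "m \<equiv> T div 100 + 2 * T div 10"
  assumes T: "10^6 \<le> T" "100 dvd T"
    and valid: "valid_pair 2 eta gamma" and regime: "nontrivial_regime T eta gamma"
    and E: "0 < wsu_prob 2 eta gamma l T (\<lambda>hs. 1/4 \<le> pi_at 2 eta gamma l hs m 0)"
  shows "cond_prob 2 eta gamma l T (\<lambda>hs. pi_at 2 eta gamma l hs T 0 \<le> 3/4)
           (\<lambda>hs. 1/4 \<le> pi_at 2 eta gamma l hs m 0) \<le> 75/4 * exp (- (79/400) * eta * real T)"
proof -
  define k where "k = T div 100"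
  define n where "n = 79 * k"
  have T_split: "T = n + m" and m: "k \<le> m" and n: "real n = 79/100 * real T"
    using T(2) unfolding n_def m_def k_def by auto
  have eta: "0 < eta" "eta * 2 / gamma \<le> 1" and gamma: "0 < gamma" "gamma \<le> 1" and "4 * eta \<le> gamma"
    using valid unfolding valid_pair_def by (auto simp: field_simps)
  have loss: "0 \<le> l t i \<and> l t i \<le> 1" and phase_two: "k < t \<Longrightarrow> l t 0 = 0 \<and> l t 1 = 1" for t i
    unfolding l_def k_def two_phase_loss_def by auto
  obtain s where s: "2 \<le> (1 + eta / 2) ^ s" "real s \<le> 2 / eta + 1"
    using doubling_exponent[OF eta(1)] .
  have "cond_prob 2 eta gamma l T (\<lambda>hs. pi_at 2 eta gamma l hs T 0 \<le> 3/4)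
          (\<lambda>hs. 1/4 \<le> pi_at 2 eta gamma l hs m 0) \<le> 3 ^ s * (7/8) ^ n"
    unfolding T_split
    by (rule phase_two_cond_prob_bound[where l = l and N = k])
       (use gamma eta loss phase_two s(1) m E[unfolded T_split] in auto)
  also have "\<dots> \<le> exp (- (79/400) * eta * real T)"
    using tail_bound_le_exp[OF T(1) _ _ \<open>4 * eta \<le> gamma\<close> s(2) n] regime
    unfolding nontrivial_regime_def by blast
  also have "\<dots> \<le> 75/4 * exp (- (79/400) * eta * real T)" by simp
  finally show ?thesis .
qed

theorem mainTheorem19:
  fixes eta gamma :: "nat \<Rightarrow> real"
  assumes "\<And>T. T \<ge> 1 \<Longrightarrow> 100 dvd T \<Longrightarrow>
             valid_pair 2 (eta T) (gamma T) \<and> nontrivial_regime T (eta T) (gamma T)"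
  shows "\<exists>T0. \<forall>T \<ge> T0. T \<ge> 1 \<longrightarrow> 100 dvd T \<longrightarrow>
     (let l = two_phase_loss T;
          E2 = (\<lambda>hs. pi_at 2 (eta T) (gamma T) l hs (T div 100 + 2 * T div 10) 0 \<ge> 1/4);
          A = (\<lambda>hs. pi_at 2 (eta T) (gamma T) l hs T 0 \<le> 3/4)
      in wsu_prob 2 (eta T) (gamma T) l T E2 > 0 \<longrightarrow>
         cond_prob 2 (eta T) (gamma T) l T A E2 \<le> 75/4 * exp (- (79/400) * eta T * real T))"
proof (intro exI[of _ "10^6"] allI impI)
  fix T :: nat
  assume "10^6 \<le> T" "1 \<le> T" "100 dvd T"
  then show "let l = two_phase_loss T;
          E2 = (\<lambda>hs. pi_at 2 (eta T) (gamma T) l hs (T div 100 + 2 * T div 10) 0 \<ge> 1/4);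
          A = (\<lambda>hs. pi_at 2 (eta T) (gamma T) l hs T 0 \<le> 3/4)
      in wsu_prob 2 (eta T) (gamma T) l T E2 > 0 \<longrightarrow>
         cond_prob 2 (eta T) (gamma T) l T A E2 \<le> 75/4 * exp (- (79/400) * eta T * real T)"
    using two_phase_cond_prob_bound assms unfolding Let_def by blast
qed

end
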